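(* Let $\{X_i\}_{i\ge1}$ be independent, identically distributed random variables on $((0,1),\mathcal{B},\mathcal{L})$, each exponentially distributed with rate $1$. For $t\ge1$ let $[t]_E=2k$ if $2k-1\le t<2k+1$, $k\in\mathbb{N}$. Define $D_1=[\exp(X_1)]_E$ and $D_{n+1}=\left[\frac{(D_n-1)(D_n+1)}{D_n}\exp(X_{n+1})\right]_E$ for $n\in\mathbb{N}$. Then $\{D_n\}_{n\ge1}$ is a time-homogeneous Markov chain with $\mathcal{L}(D_1=2k)=\frac{2}{(2k-1)(2k+1)}$ for $k\in\mathbb{N}$ and, for $k,l\in\mathbb{N}$ with $l\ge k$, $$\mathcal{L}(D_{n+1}=2l\mid D_n=2k)=\begin{cases}\frac{1}{2k},& l=k,\\ \frac{(2k-1)(2k+1)}{k(2l-1)(2l+1)},& l\ge k+1.\end{cases}$$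
   Context: $\mathcal{B}$ denotes the Borel $\sigma$-algebra of $(0,1)$ and $\mathcal{L}$ Lebesgue measure. *)

theory Defs
  imports "HOL-Probability.Probability"
begin

definition unit_interval_space :: "real measure" where
  "unit_interval_space = restrict_space lborel {0<..<1}"

text \<open>[t]_E = 2k if 2k-1 <= t < 2k+1 (intended for t >= 1, where k >= 1).\<close>
definition even_round :: "real \<Rightarrow> real" where
  "even_round t = 2 * of_int \<lfloor>(t + 1) / 2\<rfloor>"

text \<open>The chain D_n, n >= 1 (the value at index 0 is irrelevant).\<close>
fun Dseq :: "(nat \<Rightarrow> 'a \<Rightarrow> real) \<Rightarrow> nat \<Rightarrow> 'a \<Rightarrow> real" where
  "Dseq X 0 \<omega> = 0"
| "Dseq X (Suc 0) \<omega> = even_round (exp (X 1 \<omega>))"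
| "Dseq X (Suc (Suc n)) \<omega> =
     even_round ((Dseq X (Suc n) \<omega> - 1) * (Dseq X (Suc n) \<omega> + 1) / Dseq X (Suc n) \<omega>
                 * exp (X (Suc (Suc n)) \<omega>))"

definition cprob :: "'a measure \<Rightarrow> 'a set \<Rightarrow> 'a set \<Rightarrow> real" where
  "cprob M A B = measure M (A \<inter> B) / measure M B"

definition event_eq :: "'a measure \<Rightarrow> ('a \<Rightarrow> real) \<Rightarrow> real \<Rightarrow> 'a set" where
  "event_eq M Y a = {\<omega> \<in> space M. Y \<omega> = a}"

definition time_homogeneous_markov_chain :: "'a measure \<Rightarrow> (nat \<Rightarrow> 'a \<Rightarrow> real) \<Rightarrow> bool" where
  "time_homogeneous_markov_chain M D \<longleftrightarrow>
     (\<forall>n\<ge>1. D n \<in> borel_measurable M) \<and>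
     (\<forall>n\<ge>1. \<forall>s :: nat \<Rightarrow> real.
        measure M {\<omega> \<in> space M. \<forall>i\<in>{1..n}. D i \<omega> = s i} > 0 \<longrightarrow>
        cprob M (event_eq M (D (Suc n)) (s (Suc n))) {\<omega> \<in> space M. \<forall>i\<in>{1..n}. D i \<omega> = s i}
        = cprob M (event_eq M (D (Suc n)) (s (Suc n))) (event_eq M (D n) (s n))) \<and>
     (\<exists>P :: real \<Rightarrow> real \<Rightarrow> real. \<forall>n\<ge>1. \<forall>a b.
        measure M (event_eq M (D n) a) > 0 \<longrightarrow>
        cprob M (event_eq M (D (Suc n)) b) (event_eq M (D n) a) = P a b)"

end

theory Submission
  imports Defs
begin

text \<open>
  D(n) is a function of X(1), ..., X(n), and D(n+1) = f(D(n), X(n+1)). Since X(n+1) is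
  independent of the past, conditioning on the whole past or on D(n) = a alone gives the same
  probability P(f(a, X) = b), so the chain is Markov and time-homogeneous. For X ~ Exp(1),
  exp X has the Pareto law P(exp X < y) = 1 - 1/y (y \<ge> 1), and [c exp X]_E = 2l means
  2l - 1 \<le> c exp X < 2l + 1. From state 2k the factor c = (2k - 1)(2k + 1)/(2k) lies strictly
  between 2k - 1 and 2k + 1, so staying at 2k has probability 1 - c/(2k + 1) = 1/(2k), and
  jumping to 2l > 2k has probability c/(2l - 1) - c/(2l + 1).
\<close>

lemma even_round_eq_iff:
  "even_round t = 2 * real_of_int l \<longleftrightarrow> 2 * l - 1 \<le> t \<and> t < 2 * l + 1"
proof -
  have "even_round t = 2 * real_of_int l \<longleftrightarrow> \<lfloor>(t + 1) / 2\<rfloor> = l"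
    unfolding even_round_def by simp
  also have "\<dots> \<longleftrightarrow> 2 * l - 1 \<le> t \<and> t < 2 * l + 1"
    by (simp add: floor_eq_iff field_simps)
  finally show ?thesis .
qed

lemma even_round_eq_nat_iff:
  "even_round t = 2 * real k \<longleftrightarrow> 2 * real k - 1 \<le> t \<and> t < 2 * real k + 1"
  using even_round_eq_iff[of t "int k"] by simp

lemma borel_measurable_even_round [measurable]: "even_round \<in> borel_measurable borel"
  unfolding even_round_def by measurable

lemma Dseq_cong: "(\<And>i. i \<in> {1..n} \<Longrightarrow> X i \<omega> = Y i \<omega>') \<Longrightarrow> Dseq X n \<omega> = Dseq Y n \<omega>'"
  by (induction X n \<omega> rule: Dseq.induct) auto

lemma measurable_Dseq:
  assumes "\<And>i. i \<in> {1..n} \<Longrightarrow> X i \<in> borel_measurable M"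
  shows "Dseq X n \<in> borel_measurable M"
  using assms
proof (induction n rule: less_induct)
  case (less n)
  consider "n = 0" | "n = Suc 0" | m where "n = Suc (Suc m)"
    by (metis not0_implies_Suc)
  then show ?case
  proof cases
    case 1
    then show ?thesis by simp
  next
    case 2
    have [measurable]: "X 1 \<in> borel_measurable M" using less.prems 2 by simp
    have "Dseq X n = (\<lambda>\<omega>. even_round (exp (X 1 \<omega>)))" using 2 by auto
    then show ?thesis by (simp only:) measurable
  next
    case (3 m)
    have [measurable]: "Dseq X (Suc m) \<in> borel_measurable M" "X (Suc (Suc m)) \<in> borel_measurable M"
      using less 3 by auto
    have "Dseq X n = (\<lambda>\<omega>. even_round ((Dseq X (Suc m) \<omega> - 1) * (Dseq X (Suc m) \<omega> + 1)
        / Dseq X (Suc m) \<omega> * exp (X (Suc (Suc m)) \<omega>)))"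
      using 3 by auto
    then show ?thesis by simp
  qed
qed

abbreviation exp_measure :: "real measure" where
  "exp_measure \<equiv> density lborel (exponential_density 1)"

lemma prob_space_exp_measure: "prob_space exp_measure"
  by (rule prob_space_exponential_density) simp

definition pareto_cdf :: "real \<Rightarrow> real" where
  "pareto_cdf y = (if 1 \<le> y then 1 - 1 / y else 0)"

lemma pareto_cdf_divide:
  "0 < c \<Longrightarrow> pareto_cdf (y / c) = (if c \<le> y then 1 - c / y else 0)"
  by (simp add: pareto_cdf_def le_divide_eq)

lemma measure_exp_measure_exp_less:
  assumes "0 < y"
  shows "measure exp_measure {x. exp x < y} = pareto_cdf y"
proof -
  interpret prob_space exp_measure by (rule prob_space_exp_measure)
  have "emeasure exp_measure {..ln y} = erlang_CDF 0 1 (ln y)"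
    by (rule emeasure_erlang_density) simp
  then have "prob {..ln y} = pareto_cdf y"
    using assms by (simp add: measure_def erlang_CDF_0 pareto_cdf_def exp_minus inverse_eq_divide)
  moreover have "prob {ln y} = 0"
    by (simp add: measure_def emeasure_density)
  moreover have "{x. exp x < y} = {..ln y} - {ln y}"
    using assms by (auto simp: less_le ln_ge_iff)
  ultimately show ?thesis
    by (simp add: finite_measure_Diff)
qed

lemma measure_exp_measure_window:
  assumes "0 < c" "0 < u" "u \<le> v"
  shows "measure exp_measure {x. u \<le> c * exp x \<and> c * exp x < v} = pareto_cdf (v / c) - pareto_cdf (u / c)"
proof -
  interpret prob_space exp_measure by (rule prob_space_exp_measure)
  have "{x. u \<le> c * exp x \<and> c * exp x < v} = {x. exp x < v / c} - {x. exp x < u / c}"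
    using assms by (auto simp: field_simps)
  moreover have "{x. exp x < u / c} \<subseteq> {x. exp x < v / c}"
    using assms by (auto simp: field_simps)
  ultimately show ?thesis
    using assms by (simp add: finite_measure_Diff measure_exp_measure_exp_less)
qed

lemma measure_exp_measure_even_round_exp:
  assumes "k \<ge> 1"
  shows "measure exp_measure {x. even_round (exp x) = 2 * real k} = 2 / ((2 * real k - 1) * (2 * real k + 1))"
proof -
  have "measure exp_measure {x. even_round (exp x) = 2 * real k}
      = measure exp_measure {x. 2 * real k - 1 \<le> 1 * exp x \<and> 1 * exp x < 2 * real k + 1}"
    by (simp add: even_round_eq_nat_iff)
  also have "\<dots> = pareto_cdf (2 * real k + 1) - pareto_cdf (2 * real k - 1)"
    using assms by (subst measure_exp_measure_window) auto
  also have "\<dots> = 2 / ((2 * real k - 1) * (2 * real k + 1))"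
    using assms by (simp add: pareto_cdf_def field_simps)
  finally show ?thesis .
qed

definition transition_prob :: "real \<Rightarrow> real \<Rightarrow> real" where
  "transition_prob a b = measure exp_measure {x. even_round ((a - 1) * (a + 1) / a * exp x) = b}"

lemma transition_prob_even:
  assumes k: "k \<ge> 1" and "l \<ge> k"
  shows "transition_prob (2 * real k) (2 * real l) = (if l = k then 1 / (2 * real k)
      else (2 * real k - 1) * (2 * real k + 1) / (real k * (2 * real l - 1) * (2 * real l + 1)))"
proof -
  define c where "c = (2 * real k - 1) * (2 * real k + 1) / (2 * real k)"
  have "1 * 1 \<le> real k * real k"
    using k by (intro mult_mono) auto
  then have c: "0 < c" "2 * real k - 1 < c" "c < 2 * real k + 1"
    using k by (auto simp: c_def field_simps)
  have "transition_prob (2 * real k) (2 * real l)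
      = measure exp_measure {x. 2 * real l - 1 \<le> c * exp x \<and> c * exp x < 2 * real l + 1}"
    unfolding transition_prob_def c_def by (simp add: even_round_eq_nat_iff)
  also have "\<dots> = pareto_cdf ((2 * real l + 1) / c) - pareto_cdf ((2 * real l - 1) / c)"
    using c \<open>l \<ge> k\<close> k by (subst measure_exp_measure_window) auto
  also have "\<dots> = (if l = k then 1 - c / (2 * real k + 1) else c / (2 * real l - 1) - c / (2 * real l + 1))"
    using c \<open>l \<ge> k\<close> by (auto simp: pareto_cdf_divide)
  also have "\<dots> = (if l = k then 1 / (2 * real k)
      else (2 * real k - 1) * (2 * real k + 1) / (real k * (2 * real l - 1) * (2 * real l + 1)))"
  proof -
    have "2 * real k - 1 \<noteq> 0" "2 * real l - 1 \<noteq> 0" "2 * real l + 1 \<noteq> 0"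
      using k \<open>l \<ge> k\<close> by linarith+
    then show ?thesis
      using k by (simp add: c_def divide_simps) (simp add: algebra_simps)
  qed
  finally show ?thesis .
qed

lemma measurable_Dseq_coordinates:
  "j \<le> n \<Longrightarrow> Dseq (\<lambda>i x. x i) j \<in> borel_measurable (PiM {1..n} (\<lambda>_. borel))"
  by (rule measurable_Dseq) auto

locale iid_exponential = prob_space M for M :: "'a measure" +
  fixes X :: "nat \<Rightarrow> 'a \<Rightarrow> real"
  assumes indep: "indep_vars (\<lambda>_. borel) X {1..}"
    and exponential: "\<And>i. i \<ge> 1 \<Longrightarrow> distributed M lborel (X i) (exponential_density 1)"
begin

definition history :: "nat \<Rightarrow> 'a \<Rightarrow> nat \<Rightarrow> real" where
  "history n \<omega> = restrict (\<lambda>i. X i \<omega>) {1..n}"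

lemma measurable_X [measurable]: "i \<ge> 1 \<Longrightarrow> X i \<in> borel_measurable M"
  using distributed_measurable[OF exponential] by simp

lemma measurable_history [measurable]: "history n \<in> measurable M (PiM {1..n} (\<lambda>_. borel))"
  unfolding history_def by (rule measurable_restrict) auto

lemma measurable_Dseq_X [measurable]: "Dseq X n \<in> borel_measurable M"
  by (rule measurable_Dseq) auto

lemma Dseq_eq_history: "j \<le> n \<Longrightarrow> Dseq X j \<omega> = Dseq (\<lambda>i x. x i) j (history n \<omega>)"
  unfolding history_def by (rule Dseq_cong) auto

lemma prob_X: 
  assumes "i \<ge> 1" "B \<in> sets borel"
  shows "prob {\<omega>\<in>space M. X i \<omega> \<in> B} = measure exp_measure B"
proof -
  have "measure exp_measure B = measure (distr M lborel (X i)) B"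
    using distributed_distr_eq_density[OF exponential[OF assms(1)]] by simp
  also have "\<dots> = prob (X i -` B \<inter> space M)"
    using assms by (intro measure_distr) auto
  finally show ?thesis
    by (simp add: vimage_def Int_def conj_commute)
qed

lemma prob_history_X_Suc:
  assumes "S \<in> sets (PiM {1..n} (\<lambda>_. borel))" "B \<in> sets borel"
  shows "prob {\<omega>\<in>space M. history n \<omega> \<in> S \<and> X (Suc n) \<omega> \<in> B}
    = prob {\<omega>\<in>space M. history n \<omega> \<in> S} * prob {\<omega>\<in>space M. X (Suc n) \<omega> \<in> B}"
proof -
  have indep_history: "indep_var (PiM {1..n} (\<lambda>_. borel)) (history n)
      (PiM {Suc n} (\<lambda>_. borel)) (\<lambda>\<omega>. restrict (\<lambda>i. X i \<omega>) {Suc n})"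
    unfolding history_def by (rule indep_var_restrict[OF indep]) auto
  have "{f \<in> space (PiM {Suc n} (\<lambda>_. borel)). f (Suc n) \<in> B} \<in> sets (PiM {Suc n} (\<lambda>_. borel))"
    using assms(2) by measurable
  from indep_varD[OF indep_history assms(1) this] show ?thesis
    by (simp add: vimage_def Int_def conj_commute space_PiM)
qed

lemma prob_Dseq_Suc_inter:
  assumes n: "n \<ge> 1" and S: "S \<in> sets (PiM {1..n} (\<lambda>_. borel))"
    and A: "A = {\<omega>\<in>space M. history n \<omega> \<in> S}"
    and Dseq_A: "\<And>\<omega>. \<omega> \<in> A \<Longrightarrow> Dseq X n \<omega> = a"
  shows "prob (event_eq M (Dseq X (Suc n)) b \<inter> A) = prob A * transition_prob a b"
proof -
  obtain m where m: "n = Suc m" using n by (cases n) auto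
  let ?B = "{x. even_round ((a - 1) * (a + 1) / a * exp x) = b}"
  have "event_eq M (Dseq X (Suc n)) b \<inter> A = {\<omega>\<in>space M. history n \<omega> \<in> S \<and> X (Suc n) \<omega> \<in> ?B}"
    using Dseq_A unfolding A event_eq_def m by auto
  then have "prob (event_eq M (Dseq X (Suc n)) b \<inter> A) = prob A * prob {\<omega>\<in>space M. X (Suc n) \<omega> \<in> ?B}"
    using prob_history_X_Suc[OF S, of ?B] A by simp
  also have "prob {\<omega>\<in>space M. X (Suc n) \<omega> \<in> ?B} = transition_prob a b"
    unfolding transition_prob_def by (rule prob_X) auto
  finally show ?thesis .
qed

lemma prob_Dseq_transition:
  assumes "n \<ge> 1"
  shows "prob (event_eq M (Dseq X (Suc n)) b \<inter> event_eq M (Dseq X n) a)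
    = prob (event_eq M (Dseq X n) a) * transition_prob a b"
proof (rule prob_Dseq_Suc_inter[OF assms])
  show "{x \<in> space (PiM {1..n} (\<lambda>_. borel)). Dseq (\<lambda>i x. x i) n x = a} \<in> sets (PiM {1..n} (\<lambda>_. borel))"
    using measurable_Dseq_coordinates[of n n] by measurable
  show "event_eq M (Dseq X n) a
    = {\<omega>\<in>space M. history n \<omega> \<in> {x \<in> space (PiM {1..n} (\<lambda>_. borel)). Dseq (\<lambda>i x. x i) n x = a}}"
    using Dseq_eq_history[of n n] by (auto simp: event_eq_def history_def space_PiM)
qed (simp add: event_eq_def)

lemma prob_Dseq_path_transition:
  fixes s :: "nat \<Rightarrow> real"
  assumes "n \<ge> 1"
  defines "past \<equiv> {\<omega>\<in>space M. \<forall>i\<in>{1..n}. Dseq X i \<omega> = s i}"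
  shows "prob (event_eq M (Dseq X (Suc n)) b \<inter> past) = prob past * transition_prob (s n) b"
proof (rule prob_Dseq_Suc_inter[OF assms(1)])
  show "{x \<in> space (PiM {1..n} (\<lambda>_. borel)). \<forall>i\<in>{1..n}. Dseq (\<lambda>i x. x i) i x = s i}
      \<in> sets (PiM {1..n} (\<lambda>_. borel))"
  proof (rule sets.sets_Collect_finite_All)
    fix i assume "i \<in> {1..n}"
    then have [measurable]: "Dseq (\<lambda>i x. x i) i \<in> borel_measurable (PiM {1..n} (\<lambda>_. borel))"
      by (intro measurable_Dseq_coordinates) simp
    show "{x \<in> space (PiM {1..n} (\<lambda>_. borel)). Dseq (\<lambda>i x. x i) i x = s i} \<in> sets (PiM {1..n} (\<lambda>_. borel))"
      by measurable
  qed simp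
  show "past = {\<omega>\<in>space M. history n \<omega> \<in>
      {x \<in> space (PiM {1..n} (\<lambda>_. borel)). \<forall>i\<in>{1..n}. Dseq (\<lambda>i x. x i) i x = s i}}"
    using Dseq_eq_history[of _ n] by (auto simp: past_def history_def space_PiM)
qed (use assms in auto)

lemma cprob_Dseq_transition:
  assumes "n \<ge> 1" "prob (event_eq M (Dseq X n) a) > 0"
  shows "cprob M (event_eq M (Dseq X (Suc n)) b) (event_eq M (Dseq X n) a) = transition_prob a b"
  using prob_Dseq_transition[OF assms(1)] assms(2) by (simp add: cprob_def)

lemma time_homogeneous_markov_chain_Dseq: "time_homogeneous_markov_chain M (Dseq X)"
  unfolding time_homogeneous_markov_chain_def
proof (intro conjI allI impI)
  fix n :: nat and s :: "nat \<Rightarrow> real"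
  assume n: "1 \<le> n"
  let ?past = "{\<omega>\<in>space M. \<forall>i\<in>{1..n}. Dseq X i \<omega> = s i}"
  let ?E = "event_eq M (Dseq X n) (s n)"
  assume past_pos: "0 < prob ?past"
  have "?past \<subseteq> ?E"
    using n by (auto simp: event_eq_def)
  then have "prob ?past \<le> prob ?E"
    by (intro finite_measure_mono) (auto simp: event_eq_def)
  with past_pos have "0 < prob ?E" by simp
  then show "cprob M (event_eq M (Dseq X (Suc n)) (s (Suc n))) ?past
      = cprob M (event_eq M (Dseq X (Suc n)) (s (Suc n))) ?E"
    using cprob_Dseq_transition n prob_Dseq_path_transition[OF n] past_pos by (simp add: cprob_def)
qed (use cprob_Dseq_transition in auto)

lemma prob_Dseq_1:
  assumes "k \<ge> 1"
  shows "prob (event_eq M (Dseq X 1) (2 * real k)) = 2 / ((2 * real k - 1) * (2 * real k + 1))"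
proof -
  have "prob (event_eq M (Dseq X 1) (2 * real k)) = prob {\<omega>\<in>space M. X 1 \<omega> \<in> {x. even_round (exp x) = 2 * real k}}"
    by (simp add: event_eq_def)
  also have "\<dots> = measure exp_measure {x. even_round (exp x) = 2 * real k}"
    by (rule prob_X) auto
  finally show ?thesis
    using measure_exp_measure_even_round_exp[OF assms] by simp
qed

text \<open>Needed because cprob is 0 for a null conditioning event.\<close>
lemma prob_Dseq_even_pos:
  assumes "n \<ge> 1" and k: "k \<ge> 1"
  shows "prob (event_eq M (Dseq X n) (2 * real k)) > 0"
  using assms(1)
proof (induction n rule: nat_induct_at_least)
  case base
  have "0 < 2 * real k - 1"
    using k by simp
  then show ?case
    unfolding prob_Dseq_1[OF k] by simp
next
  case (Suc n)
  let ?E = "event_eq M (Dseq X n) (2 * real k)"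
  let ?F = "event_eq M (Dseq X (Suc n)) (2 * real k)"
  have "0 < prob ?E / (2 * real k)"
    using Suc.IH k by simp
  also have "\<dots> = prob (?F \<inter> ?E)"
    using prob_Dseq_transition[OF Suc.hyps] transition_prob_even[OF k order_refl] by simp
  also have "\<dots> \<le> prob ?F"
    by (intro finite_measure_mono) (auto simp: event_eq_def)
  finally show ?case .
qed

end

theorem lemma3p1:
  fixes X :: "nat \<Rightarrow> real \<Rightarrow> real"
  assumes indep: "prob_space.indep_vars unit_interval_space (\<lambda>_. borel) X {1..}"
    and expo: "\<And>i. i \<ge> 1 \<Longrightarrow> distributed unit_interval_space lborel (X i) (exponential_density 1)"
  shows "time_homogeneous_markov_chain unit_interval_space (Dseq X)
    \<and> (\<forall>k::nat. k \<ge> 1 \<longrightarrow>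
         measure unit_interval_space (event_eq unit_interval_space (Dseq X 1) (2 * real k))
           = 2 / ((2 * real k - 1) * (2 * real k + 1)))
    \<and> (\<forall>n::nat. \<forall>k::nat. \<forall>l::nat. n \<ge> 1 \<longrightarrow> k \<ge> 1 \<longrightarrow> l \<ge> k \<longrightarrow>
         cprob unit_interval_space (event_eq unit_interval_space (Dseq X (Suc n)) (2 * real l))
                                   (event_eq unit_interval_space (Dseq X n) (2 * real k))
           = (if l = k then 1 / (2 * real k)
              else (2 * real k - 1) * (2 * real k + 1) / (real k * (2 * real l - 1) * (2 * real l + 1))))"
proof -
  have "prob_space unit_interval_space"
    unfolding unit_interval_space_def by (rule prob_space_restrict_space) auto
  then interpret iid_exponential unit_interval_space X
    using indep expo by (simp add: iid_exponential_def iid_exponential_axioms_def)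
  show ?thesis
    using time_homogeneous_markov_chain_Dseq prob_Dseq_1
      cprob_Dseq_transition[OF _ prob_Dseq_even_pos] transition_prob_even by auto
qed

end
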